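(* Consider the stochastic Hydra game described below. From any hydra $H$ with root node $r$ satisfying $T(r)\ge\omega$ (and any current regrowth capacity), one can reach, in one round and with non-zero probabilities, an infinite sequence of hydras $H_1,H_2,\ldots$ with roots $r_1,r_2,\ldots$ such that the smallest ordinal larger than all of $T(r_1),T(r_2),\ldots$ is $T(r)$.
   Context: A hydra is a finite rooted tree; a head is a leaf (together with the edge to its parent). Ordinal mapping: for a hydra, define $T$ on its nodes by $T(v)=0$ for a leaf $v$, and for an internal node $v$ with children $v_1,\ldots,v_m$, $T(v)$ is the natural (Hessenberg) sum $\omega^{T(v_1)}\#\cdots\#\omega^{T(v_m)}$; values lie below $\varepsilon_0$. The game maintains a positive integer regrowth capacity $N$ (initially $4$). A round from hydra $H$: if $H$ is empty the game ends; otherwise Hercules chooses a leaf $l$; let $p$ be its parent and $g$ its grandparent (if it exists), and remove $l$. If $g$ exists, the Hydra nondeterministically repeatedly chooses whether to evolve: each evolution attempt ends the game (the Hydra dies) with probability $1/2$ and otherwise multiplies $N$ by $4$; thus after choosing exactly $m$ evolutions the game continues with probability $2^{-m}$ and capacity $N\cdot4^m$. Then, with $N'$ the current capacity, $N'-1$ copies of the (remaining) subtree rooted at $p$ are grown as new children of $g$. If $g$ does not exist, nothing grows. "Reach in one round with non-zero probability" means: for some choice of Hercules' leaf and the Hydra's nondeterministic choices, the resulting hydra occurs at the end of the round with positive probability. *)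

theory Defs
  imports Complex_Main "HOL-Library.Multiset"
begin

text \<open>An ordinal below epsilon_0 is represented by the multiset of exponents of its
  Cantor normal form: Om {#a1, ..., am#} denotes the natural sum
  omega^a1 # ... # omega^am (natural sum is order independent, so a multiset is exact,
  and the Cantor normal form is unique, so equality of representations is equality
  of ordinals).\<close>

datatype ord0 = Om "ord0 multiset"

text \<open>Ordinal comparison of Cantor normal forms (comparison of the descending exponent
  sequences), expressed as the Dershowitz--Manna extension of the order on exponents.\<close>

inductive lessO :: "ord0 \<Rightarrow> ord0 \<Rightarrow> bool" where
  "M \<noteq> N \<Longrightarrow>
   (\<forall>y. count N y < count M y \<longrightarrow> (\<exists>x. lessO y x \<and> count M x < count N x)) \<Longrightarrow>
   lessO (Om M) (Om N)"

definition leO :: "ord0 \<Rightarrow> ord0 \<Rightarrow> bool" where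
  "leO a b \<longleftrightarrow> lessO a b \<or> a = b"

definition zeroO :: ord0 where "zeroO = Om {#}"
definition oneO :: ord0 where "oneO = Om {#zeroO#}"
definition omegaO :: ord0 where "omegaO = Om {#oneO#}"

datatype hydra = Nd "hydra list"

fun T :: "hydra \<Rightarrow> ord0" where
  "T (Nd cs) = Om (mset (map T cs))"

definition del_at :: "nat \<Rightarrow> 'a list \<Rightarrow> 'a list" where
  "del_at i xs = take i xs @ drop (Suc i) xs"

text \<open>grow_step N m H H': Hercules cuts a head l whose grandparent g exists, the Hydra
  chooses exactly m evolutions (capacity becomes N' = N * 4^m), and N' - 1 copies of the
  remaining subtree at the parent p are added as new children of g.
  The rule grow handles the case where g is the root of the current (sub)tree; the rule
  descend locates g deeper in the tree.\<close>

inductive grow_step :: "nat \<Rightarrow> nat \<Rightarrow> hydra \<Rightarrow> hydra \<Rightarrow> bool" where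
  grow: "i < length cs \<Longrightarrow> cs ! i = Nd ps \<Longrightarrow> j < length ps \<Longrightarrow> ps ! j = Nd [] \<Longrightarrow>
         p' = Nd (del_at j ps) \<Longrightarrow>
         grow_step N m (Nd cs) (Nd (cs[i := p'] @ replicate (N * 4 ^ m - 1) p'))"
| descend: "i < length cs \<Longrightarrow> grow_step N m (cs ! i) c' \<Longrightarrow>
         grow_step N m (Nd cs) (Nd (cs[i := c']))"

text \<open>round_outcome N H H' q: starting from hydra H with regrowth capacity N, for some
  choice of Hercules' head and of the Hydra's nondeterministic choices, the round ends
  (the game continuing) with hydra H' with probability q.\<close>

inductive round_outcome :: "nat \<Rightarrow> hydra \<Rightarrow> hydra \<Rightarrow> real \<Rightarrow> bool" where
  root_cut: "i < length cs \<Longrightarrow> cs ! i = Nd [] \<Longrightarrow> round_outcome N (Nd cs) (Nd (del_at i cs)) 1"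
| evolve: "grow_step N m H H' \<Longrightarrow> round_outcome N H H' (1 / 2 ^ m)"

definition reach_one_round :: "nat \<Rightarrow> hydra \<Rightarrow> hydra \<Rightarrow> bool" where
  "reach_one_round N H H' \<longleftrightarrow> (\<exists>q > 0. round_outcome N H H' q)"

end

theory Submission
  imports Defs "HOL-Library.Multiset_Order"
begin

(*
  Read T v as the Cantor normal form with one exponent T c for each child c of v.
  If the root has a leaf child, T H is a successor, and cutting that leaf yields its
  predecessor. Otherwise follow, from the root, children of least ordinal down to the first
  node c that has a leaf child, and let g be its parent. Then T c = T c' + 1, where c' is c
  without that leaf, and cutting the leaf after m evolutions replaces the exponent T c at g by
  N * 4^m copies of T c'; since omega^(T c') * n is cofinal below omega^(T c' + 1), these
  ordinals are cofinal below T g. Cofinality then propagates up the path, because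
  replacing the least exponent of a Cantor normal form by a cofinal sequence of smaller
  exponents yields a cofinal sequence again.
*)

definition cofinal_below :: "(nat \<Rightarrow> 'a::order) \<Rightarrow> 'a \<Rightarrow> bool" where
  "cofinal_below f a \<longleftrightarrow> (\<forall>i. f i < a) \<and> (\<forall>b<a. \<exists>i. b < f i)"

definition lsub :: "(nat \<Rightarrow> 'a::order) \<Rightarrow> 'a \<Rightarrow> bool" where
  "lsub f a \<longleftrightarrow> (\<forall>i. f i < a) \<and> (\<forall>b. (\<forall>i. f i < b) \<longrightarrow> a \<le> b)"

lemma lsub_if_cofinal_below:
  fixes a :: "'a::linorder"
  shows "cofinal_below f a \<Longrightarrow> lsub f a"
  unfolding cofinal_below_def lsub_def by (meson leI less_asym)

lemma lsub_const_if_predecessor: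
  fixes a p :: "'a::linorder"
  shows "(\<And>b. b < a \<longleftrightarrow> b \<le> p) \<Longrightarrow> lsub (\<lambda>_. p) a"
  unfolding lsub_def by (meson leI leD order_refl)

lemma less_multiset_filter_split:
  fixes M N :: "'a::linorder multiset"
  assumes up: "\<And>x y. P x \<Longrightarrow> x \<le> y \<Longrightarrow> P y"
  shows "M < N \<longleftrightarrow> filter_mset P M < filter_mset P N \<or>
    (filter_mset P M = filter_mset P N \<and> {#x \<in># M. \<not> P x#} < {#x \<in># N. \<not> P x#})"
    (is "_ \<longleftrightarrow> ?high M N \<or> ?low M N")
proof -
  have split: "\<And>M. M = filter_mset P M + {#x \<in># M. \<not> P x#}"
    by (rule multiset_partition)
  have high: "M < N" if lt: "?high M N" for M N :: "'a multiset"
    unfolding less_multiset\<^sub>H\<^sub>O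
  proof (intro conjI allI impI)
    show "M \<noteq> N" using lt by auto
    obtain z where z: "count (filter_mset P M) z < count (filter_mset P N) z"
      using lt_imp_ex_count_lt[OF lt] by blast
    then have "P z" by (auto split: if_splits)
    fix y assume y: "count N y < count M y"
    show "\<exists>x>y. count M x < count N x"
    proof (cases "P y")
      case True
      with y have "count (filter_mset P N) y < count (filter_mset P M) y" by simp
      then obtain x where "y < x" "count (filter_mset P M) x < count (filter_mset P N) x"
        using lt unfolding less_multiset\<^sub>H\<^sub>O by blast
      then show ?thesis by (auto split: if_splits)
    next
      case False
      then have "y < z" using up \<open>P z\<close> by (meson not_le)
      with z \<open>P z\<close> show ?thesis by auto
    qed
  qed
  have low: "M < N" if "?low M N" for M N :: "'a multiset"
    using that split[of M] split[of N] by (metis add_less_cancel_left)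
  show ?thesis
  proof
    assume "M < N"
    show "?high M N \<or> ?low M N"
    proof (rule ccontr)
      assume "\<not> (?high M N \<or> ?low M N)"
      then have "?high N M \<or> (filter_mset P N = filter_mset P M \<and>
          {#x \<in># N. \<not> P x#} \<le> {#x \<in># M. \<not> P x#})"
        by auto
      then have "N \<le> M" using high low split[of M] split[of N] by (metis order.order_iff_strict)
      with \<open>M < N\<close> show False by simp
    qed
  qed (use high low in blast)
qed

lemma replicate_mset_less_replicate_mset_iff:
  "replicate_mset m x < replicate_mset n x \<longleftrightarrow> m < n"
  for x :: "'a::linorder"
proof -
  have less: "replicate_mset m x < replicate_mset n x" if "m < n" for m n
    using that by (intro subset_imp_less_mset)
      (auto simp: subset_mset.less_le replicate_mset_msubseteq_iff replicate_mset_eq_iff)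
  then show ?thesis by (metis less_asym not_less_iff_gr_or_eq)
qed

lemma add_mset_le_if_less:
  fixes A B :: "'a::linorder multiset"
  assumes "\<forall>x\<in>#A. g \<le> x" and "\<forall>x\<in>#B. g \<le> x" and "A < B"
  shows "add_mset g A \<le> B"
proof (rule ccontr)
  assume "\<not> add_mset g A \<le> B"
  then have "B < add_mset g A" by simp
  let ?high = "filter_mset (\<lambda>x. g < x)"
  have split: "M < N \<longleftrightarrow> ?high M < ?high N \<or>
      (?high M = ?high N \<and> {#x \<in># M. \<not> g < x#} < {#x \<in># N. \<not> g < x#})" for M N :: "'a multiset"
    by (rule less_multiset_filter_split) simp
  have high_add: "?high (add_mset g A) = ?high A" by simp
  have "?high A \<le> ?high B" "?high B \<le> ?high A"
    using split[of A B] split[of B "add_mset g A"] \<open>A < B\<close> \<open>B < add_mset g A\<close>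
    unfolding high_add by auto
  then have "?high A = ?high B" by (rule order.antisym)
  then have "{#x \<in># A. \<not> g < x#} < {#x \<in># B. \<not> g < x#}"
    "{#x \<in># B. \<not> g < x#} < add_mset g {#x \<in># A. \<not> g < x#}"
    using split[of A B] split[of B "add_mset g A"] \<open>A < B\<close> \<open>B < add_mset g A\<close>
    unfolding high_add by auto
  moreover have "{#x \<in># M. \<not> g < x#} = replicate_mset (count M g) g" if "\<forall>x\<in>#M. g \<le> x" for M
  proof -
    have "{#x \<in># M. \<not> g < x#} = {#x \<in># M. x = g#}"
      using that by (intro filter_mset_cong) auto
    then show ?thesis by (simp add: filter_eq_replicate_mset)
  qed
  ultimately show False
    using assms by (simp flip: replicate_mset_Suc add: replicate_mset_less_replicate_mset_iff)
qed

lemma less_plus_if_less_add_mset: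
  fixes K B L :: "'a::linorder multiset"
  assumes B: "\<forall>x\<in>#B. g \<le> x" and L: "\<forall>x\<in>#L. x < g"
    and K: "K < add_mset g B" and low: "{#x \<in># K. x < g#} < L"
  shows "K < B + L"
proof -
  let ?high = "filter_mset ((\<le>) g)"
  have split: "M < N \<longleftrightarrow> ?high M < ?high N \<or>
      (?high M = ?high N \<and> {#x \<in># M. \<not> g \<le> x#} < {#x \<in># N. \<not> g \<le> x#})" for M N :: "'a multiset"
    by (rule less_multiset_filter_split) simp
  have "?high K \<le> K" by (rule subset_eq_imp_le_multiset) simp
  then have "?high K < add_mset g B" using K by simp
  then have "?high K \<le> B"
    using add_mset_le_if_less[of B g "?high K"] B by (metis leD le_less_linear mem_Collect_eq set_mset_filter)
  have "?high B = B" "?high L = {#}"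
    "{#x \<in># B. \<not> g \<le> x#} = {#}" "{#x \<in># L. \<not> g \<le> x#} = L"
    using B L by (auto simp: filter_mset_eq_conv not_le dest: leD)
  then have high: "?high (B + L) = B" and low_BL: "{#x \<in># B + L. \<not> g \<le> x#} = L"
    by simp_all
  have low_K: "{#x \<in># K. \<not> g \<le> x#} = {#x \<in># K. x < g#}"
    by (simp add: not_le)
  from \<open>?high K \<le> B\<close> consider "?high K < B" | "?high K = B"
    by (auto simp: order.order_iff_strict)
  then show ?thesis
    using split[of K "B + L"] high low_BL low_K low by cases simp_all
qed

lemma cofinal_below_add_mset:
  fixes B :: "'a::linorder multiset"
  assumes B: "\<forall>x\<in>#B. g \<le> x" and f: "cofinal_below f g"
  shows "cofinal_below (\<lambda>i. add_mset (f i) B) (add_mset g B)"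
  unfolding cofinal_below_def
proof (intro conjI allI impI)
  fix i
  show "add_mset (f i) B < add_mset g B"
    using f by (simp add: cofinal_below_def add_mset_lt_left_lt)
next
  fix K assume K: "K < add_mset g B"
  let ?low = "{#x \<in># K. x < g#}"
  obtain i where "?low < {#f i#}"
  proof (cases "?low = {#}")
    case True
    then show ?thesis by (intro that[of 0]) auto
  next
    case False
    then have "Max_mset ?low \<in># ?low" by (intro Max_in) auto
    then have "Max_mset ?low < g" by simp
    then obtain i where "Max_mset ?low < f i" using f by (auto simp: cofinal_below_def)
    then have "\<forall>x\<in>#?low. x < f i"
      using Max_ge[OF finite_set_mset] le_less_trans by blast
    then show ?thesis by (intro that[of i]) simp
  qed
  moreover have "f i < g" using f by (simp add: cofinal_below_def)
  ultimately have "K < B + {#f i#}" by (intro less_plus_if_less_add_mset[OF B _ K]) auto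
  then show "\<exists>i. K < add_mset (f i) B" by auto
qed

lemma cofinal_below_replicate_mset:
  fixes B :: "'a::linorder multiset"
  assumes B: "\<forall>x\<in>#B. g \<le> x" and "d < g" and succ: "\<forall>x<g. x \<le> d"
    and n: "\<forall>k. \<exists>i. k < n i"
  shows "cofinal_below (\<lambda>i. B + replicate_mset (n i) d) (add_mset g B)"
  unfolding cofinal_below_def
proof (intro conjI allI impI)
  fix i
  have "replicate_mset (n i) d < {#g#}" using \<open>d < g\<close> by simp
  then show "B + replicate_mset (n i) d < add_mset g B" by simp
next
  fix K assume K: "K < add_mset g B"
  let ?low = "{#x \<in># K. x < g#}"
  obtain i where "size ?low < n i" using n by blast
  then have "count ?low d < count (replicate_mset (n i) d) d"
    using count_le_size[of ?low d] by simp
  then have "?low < replicate_mset (n i) d"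
    using succ by (intro ex_gt_count_imp_le_multiset) auto
  then have "K < B + replicate_mset (n i) d"
    using \<open>d < g\<close> by (intro less_plus_if_less_add_mset[OF B _ K]) auto
  then show "\<exists>i. K < B + replicate_mset (n i) d" by blast
qed

fun exps :: "ord0 \<Rightarrow> ord0 multiset" where
  "exps (Om M) = M"

lemma inj_exps: "inj exps"
  by (rule injI) (metis exps.simps ord0.exhaust)

lemma lessO_iff_multp\<^sub>H\<^sub>O: "lessO a b \<longleftrightarrow> multp\<^sub>H\<^sub>O lessO (exps a) (exps b)"
proof
  assume "lessO a b"
  then show "multp\<^sub>H\<^sub>O lessO (exps a) (exps b)"
    by cases (auto simp: multp\<^sub>H\<^sub>O_def)
next
  assume "multp\<^sub>H\<^sub>O lessO (exps a) (exps b)"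
  then show "lessO a b"
    by (cases a; cases b) (auto simp: multp\<^sub>H\<^sub>O_def intro: lessO.intros)
qed

lemma size_less_if_mem_exps: "x \<in># exps a \<Longrightarrow> size x < size a"
  by (cases a) (auto dest!: multi_member_split)

lemma lessO_strict_total_order_on_size_le:
  "asymp_on {a. size a \<le> n} lessO \<and> transp_on {a. size a \<le> n} lessO \<and>
   totalp_on {a. size a \<le> n} lessO"
proof (induction n)
  case 0
  have "0 < size a" for a :: ord0 by (cases a) simp
  then have "{a::ord0. size a \<le> 0} = {}" by (simp add: leD)
  then show ?case by (simp only:) (simp add: asymp_on_def transp_on_def)
next
  case (Suc n)
  let ?A = "{a::ord0. size a \<le> Suc n}"
  have "set_mset M \<subseteq> {a. size a \<le> n}" if "M \<in> exps ` ?A" for M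
    using that size_less_if_mem_exps by fastforce
  then have "asymp_on (exps ` ?A) (multp\<^sub>H\<^sub>O lessO) \<and> transp_on (exps ` ?A) (multp\<^sub>H\<^sub>O lessO) \<and>
      totalp_on (exps ` ?A) (multp\<^sub>H\<^sub>O lessO)"
    using Suc.IH asymp_on_multp\<^sub>H\<^sub>O transp_on_multp\<^sub>H\<^sub>O totalp_on_multp\<^sub>H\<^sub>O by metis
  then show ?case
    unfolding asymp_on_image transp_on_image totalp_on_image[OF inj_on_subset[OF inj_exps subset_UNIV]]
    by (simp flip: lessO_iff_multp\<^sub>H\<^sub>O)
qed

lemma lessO_asym: "lessO a b \<Longrightarrow> \<not> lessO b a"
  using lessO_strict_total_order_on_size_le[of "max (size a) (size b)"] by (auto simp: asymp_on_def)

lemma lessO_trans: "lessO a b \<Longrightarrow> lessO b c \<Longrightarrow> lessO a c"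
  using lessO_strict_total_order_on_size_le[of "max (size a) (max (size b) (size c))"]
  unfolding transp_on_def by (metis max.cobounded1 max.cobounded2 max.coboundedI2 mem_Collect_eq)

lemma lessO_total: "a \<noteq> b \<Longrightarrow> lessO a b \<or> lessO b a"
  using lessO_strict_total_order_on_size_le[of "max (size a) (size b)"] by (auto simp: totalp_on_def)

instantiation ord0 :: linorder
begin

definition less_ord0 :: "ord0 \<Rightarrow> ord0 \<Rightarrow> bool" where
  "less_ord0 = lessO"

definition less_eq_ord0 :: "ord0 \<Rightarrow> ord0 \<Rightarrow> bool" where
  "less_eq_ord0 = leO"

instance
  by standard (auto simp: less_ord0_def less_eq_ord0_def leO_def
      dest: lessO_asym lessO_total intro: lessO_trans)

end

lemma lessO_eq_less: "lessO = (<)"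
  by (simp add: less_ord0_def)

lemma leO_eq_le: "leO = (\<le>)"
  by (simp add: less_eq_ord0_def)

lemma Om_less_Om_iff [simp]: "Om M < Om N \<longleftrightarrow> M < N"
proof -
  have "Om M < Om N \<longleftrightarrow> multp\<^sub>H\<^sub>O (<) M N"
    using lessO_iff_multp\<^sub>H\<^sub>O[of "Om M" "Om N"] by (simp add: lessO_eq_less)
  then show ?thesis by (simp add: multp\<^sub>H\<^sub>O_def less_multiset\<^sub>H\<^sub>O)
qed

lemma Om_le_Om_iff [simp]: "Om M \<le> Om N \<longleftrightarrow> M \<le> N"
  by (auto simp: order.order_iff_strict)

lemma zeroO_le: "zeroO \<le> a"
  by (cases a) (simp add: zeroO_def)

lemma less_Om_add_mset_zeroO_iff: "b < Om (add_mset zeroO M) \<longleftrightarrow> b \<le> Om M"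
proof (cases b)
  case (Om K)
  have "K < add_mset zeroO M \<longleftrightarrow> K \<le> M"
  proof
    show "K < add_mset zeroO M" if "K \<le> M"
      using that le_multiset_right_total by (rule le_less_trans)
    show "K \<le> M" if "K < add_mset zeroO M"
      using that add_mset_le_if_less[of M zeroO K] zeroO_le by (meson leD le_less_linear)
  qed
  then show ?thesis by (simp add: Om)
qed

lemma cofinal_below_Om: "cofinal_below f M \<Longrightarrow> cofinal_below (\<lambda>i. Om (f i)) (Om M)"
  unfolding cofinal_below_def by (metis Om_less_Om_iff ord0.exhaust)

lemma mset_del_at: "i < length xs \<Longrightarrow> mset xs = add_mset (xs ! i) (mset (del_at i xs))"
  by (subst id_take_nth_drop[of i xs]) (simp_all add: del_at_def)

lemma T_del_leaf:
  assumes "i < length cs" and "cs ! i = Nd []"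
  shows "T (Nd cs) = Om (add_mset zeroO (mset (map T (del_at i cs))))"
proof -
  have "map T (del_at i cs) = del_at i (map T cs)"
    by (simp add: del_at_def take_map drop_map)
  then show ?thesis
    using assms mset_del_at[of i "map T cs"] by (simp add: zeroO_def)
qed

lemma less_T_iff_le_T_del_leaf:
  "i < length cs \<Longrightarrow> cs ! i = Nd [] \<Longrightarrow> b < T (Nd cs) \<longleftrightarrow> b \<le> T (Nd (del_at i cs))"
  by (simp only: T_del_leaf) (simp add: less_Om_add_mset_zeroO_iff)

lemma reach_one_round_del_leaf:
  "i < length cs \<Longrightarrow> cs ! i = Nd [] \<Longrightarrow> reach_one_round N (Nd cs) (Nd (del_at i cs))"
  unfolding reach_one_round_def by (blast intro: root_cut zero_less_one)

lemma reach_one_round_if_grow_step: "grow_step N m H H' \<Longrightarrow> reach_one_round N H H'"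
  unfolding reach_one_round_def by (intro exI[of _ "1 / 2 ^ m"]) (simp add: evolve)

definition grow_cofinal :: "nat \<Rightarrow> hydra \<Rightarrow> bool" where
  "grow_cofinal N H \<longleftrightarrow>
    (\<exists>Hs. (\<forall>i. \<exists>m. grow_step N m H (Hs i)) \<and> cofinal_below (\<lambda>i. T (Hs i)) (T H))"

lemma min_child_decomposition:
  assumes "cs \<noteq> []"
  obtains k B where "k < length cs" and "\<forall>x\<in>#B. T (cs ! k) \<le> x"
    and "\<And>c. mset (map T (cs[k := c])) = add_mset (T c) B"
proof -
  have "Min (T ` set cs) \<in> T ` set cs"
    using assms by (intro Min_in) auto
  then obtain k where k: "k < length cs" and min: "T (cs ! k) = Min (T ` set cs)"
    by (metis imageE in_set_conv_nth)
  define B where "B = mset (map T cs) - {#T (cs ! k)#}"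
  have "\<forall>x\<in>#B. T (cs ! k) \<le> x"
    unfolding B_def min by (auto dest: in_diffD)
  moreover have "mset (map T (cs[k := c])) = add_mset (T c) B" for c
    using k by (simp add: map_update mset_update B_def)
  ultimately show ?thesis using k that by blast
qed

lemma grow_cofinal_at_leaf_of_child:
  assumes "N > 0" and k: "k < length cs" "cs ! k = Nd ps" and j: "j < length ps" "ps ! j = Nd []"
    and B: "\<forall>x\<in>#B. T (cs ! k) \<le> x" and upd: "\<And>c. mset (map T (cs[k := c])) = add_mset (T c) B"
  shows "grow_cofinal N (Nd cs)"
proof -
  let ?p = "Nd (del_at j ps)"
  define Hs where "Hs m = Nd (cs[k := ?p] @ replicate (N * 4 ^ m - 1) ?p)" for m
  have T_Hs: "T (Hs m) = Om (B + replicate_mset (N * 4 ^ m) (T ?p))" for m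
  proof -
    obtain r where "N * 4 ^ m = Suc r" using \<open>N > 0\<close> not0_implies_Suc by fastforce
    then show ?thesis unfolding Hs_def using upd by simp
  qed
  have T_cs: "T (Nd cs) = Om (add_mset (T (cs ! k)) B)"
    using upd[of "cs ! k"] by simp
  have "n < N * 4 ^ n" for n
  proof -
    have "n < 4 ^ n" by (induction n) auto
    also have "\<dots> \<le> N * 4 ^ n" using \<open>N > 0\<close> by simp
    finally show ?thesis .
  qed
  moreover have "T ?p < T (cs ! k)" "\<forall>x<T (cs ! k). x \<le> T ?p"
    using less_T_iff_le_T_del_leaf[OF j] k(2) by auto
  ultimately have "cofinal_below (\<lambda>m. B + replicate_mset (N * 4 ^ m) (T ?p)) (add_mset (T (cs ! k)) B)"
    by (intro cofinal_below_replicate_mset[OF B]) blast+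
  then have "cofinal_below (\<lambda>m. T (Hs m)) (T (Nd cs))"
    unfolding T_Hs T_cs by (rule cofinal_below_Om)
  moreover have "grow_step N m (Nd cs) (Hs m)" for m
    unfolding Hs_def by (rule grow[OF k j refl])
  ultimately show ?thesis
    unfolding grow_cofinal_def by blast
qed

lemma grow_cofinal_at_child:
  assumes k: "k < length cs" and B: "\<forall>x\<in>#B. T (cs ! k) \<le> x"
    and upd: "\<And>c. mset (map T (cs[k := c])) = add_mset (T c) B"
    and "grow_cofinal N (cs ! k)"
  shows "grow_cofinal N (Nd cs)"
proof -
  obtain Ys where grow: "\<forall>i. \<exists>m. grow_step N m (cs ! k) (Ys i)"
    and cof: "cofinal_below (\<lambda>i. T (Ys i)) (T (cs ! k))"
    using \<open>grow_cofinal N (cs ! k)\<close> unfolding grow_cofinal_def by blast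
  define Hs where "Hs i = Nd (cs[k := Ys i])" for i
  have "T (Hs i) = Om (add_mset (T (Ys i)) B)" for i
    unfolding Hs_def using upd by simp
  moreover have "T (Nd cs) = Om (add_mset (T (cs ! k)) B)"
    using upd[of "cs ! k"] by simp
  ultimately have "cofinal_below (\<lambda>i. T (Hs i)) (T (Nd cs))"
    using cofinal_below_Om[OF cofinal_below_add_mset[OF B cof]] by simp
  moreover have "\<forall>i. \<exists>m. grow_step N m (Nd cs) (Hs i)"
    unfolding Hs_def using grow descend[OF k] by blast
  ultimately show ?thesis
    unfolding grow_cofinal_def by blast
qed

lemma grow_cofinal_if_no_leaf_child:
  assumes "N > 0"
  shows "cs \<noteq> [] \<Longrightarrow> Nd [] \<notin> set cs \<Longrightarrow> grow_cofinal N (Nd cs)"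
proof (induction "Nd cs" arbitrary: cs rule: hydra.induct)
  case (Nd cs)
  obtain k B where k: "k < length cs" and B: "\<forall>x\<in>#B. T (cs ! k) \<le> x"
    and upd: "\<And>c. mset (map T (cs[k := c])) = add_mset (T c) B"
    using min_child_decomposition[OF \<open>cs \<noteq> []\<close>] by blast
  obtain ps where ps: "cs ! k = Nd ps" by (cases "cs ! k")
  have "ps \<noteq> []" using Nd.prems(2) k ps nth_mem by fastforce
  show ?case
  proof (cases "Nd [] \<in> set ps")
    case True
    then obtain j where "j < length ps" "ps ! j = Nd []" by (auto simp: in_set_conv_nth)
    then show ?thesis by (rule grow_cofinal_at_leaf_of_child[OF assms k ps _ _ B upd])
  next
    case False
    have "Nd ps \<in> set cs" using nth_mem[OF k] ps by simp
    then have "grow_cofinal N (cs ! k)"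
      using Nd.hyps \<open>ps \<noteq> []\<close> False ps by simp
    then show ?thesis by (rule grow_cofinal_at_child[OF k B upd])
  qed
qed

theorem lemma2p2:
  fixes H :: hydra and N :: nat
  assumes "N > 0"
    and "leO omegaO (T H)"
  shows "\<exists>Hs :: nat \<Rightarrow> hydra.
           (\<forall>i. reach_one_round N H (Hs i)) \<and>
           (\<forall>i. lessO (T (Hs i)) (T H)) \<and>
           (\<forall>b. (\<forall>i. lessO (T (Hs i)) b) \<longrightarrow> leO (T H) b)"
proof -
  obtain cs where H: "H = Nd cs" by (cases H)
  have "\<exists>Hs. (\<forall>i. reach_one_round N H (Hs i)) \<and> lsub (\<lambda>i. T (Hs i)) (T H)"
  proof (cases "Nd [] \<in> set cs")
    case True
    then obtain i where i: "i < length cs" "cs ! i = Nd []" by (auto simp: in_set_conv_nth)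
    have "lsub (\<lambda>_. T (Nd (del_at i cs))) (T H)"
      unfolding H by (intro lsub_const_if_predecessor less_T_iff_le_T_del_leaf[OF i])
    then show ?thesis
      using reach_one_round_del_leaf[OF i] H by (intro exI[of _ "\<lambda>_. Nd (del_at i cs)"]) simp
  next
    case False
    have "cs \<noteq> []" using assms(2) H by (auto simp: omegaO_def leO_eq_le)
    then obtain Hs where "\<forall>i. \<exists>m. grow_step N m H (Hs i)" and "cofinal_below (\<lambda>i. T (Hs i)) (T H)"
      using grow_cofinal_if_no_leaf_child[OF assms(1)] False H unfolding grow_cofinal_def by blast
    then show ?thesis
      using reach_one_round_if_grow_step lsub_if_cofinal_below by blast
  qed
  then show ?thesis
    unfolding lsub_def lessO_eq_less leO_eq_le .
qed

end
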